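(* Let $a<b$, integers $1\le p\le n$, $P_1=P_1^T\in\mathbb{R}^{n\times n}$ invertible, $P_0=-P_0^T\in\mathbb{R}^{n\times n}$, $\mathcal{X}=L^2([a,b];\mathbb{R}^n)$, $Z$ a real Hilbert space, $H\in\mathcal{L}(Z,\mathcal{X})$, $\delta t>0$ fixed, and $\mathcal{J}e=P_1\frac{de}{d\zeta}+P_0e$ for $e\in H^1([a,b];\mathbb{R}^n)$. Let $\mathcal{D}^A$ be the set of all $(\delta f_\varepsilon,\delta f_w,\delta f_\partial,e_\varepsilon,e_w,e_\partial)\in(\mathcal{X}\times Z\times\mathbb{R}^n)^2$ with $e_\varepsilon\in H^1([a,b];\mathbb{R}^n)$, $\delta f_\varepsilon=\mathcal{J}e_\varepsilon\delta t+H\delta f_w$, $\delta f_\partial=\frac{1}{\sqrt2}P_1(e_\varepsilon(b)-e_\varepsilon(a))\delta t$, $e_\partial=\frac{1}{\sqrt2}(e_\varepsilon(b)+e_\varepsilon(a))$, $e_w=H^*e_\varepsilon$, where the boundary ports are split as $\delta f_\partial=(\delta f_{\partial,n-p},f_p)$, $e_\partial=(e_{\partial,n-p},e_p)$ with $\delta f_{\partial,n-p},e_{\partial,n-p}\in\mathbb{R}^{n-p}$ and $f_p,e_p\in\mathbb{R}^p$. Let $\mathcal{F}_3,\mathcal{E}_3$ be real Hilbert spaces, $j_3:\mathcal{F}_3\to\mathcal{E}_3$ a unitary invertible linear map, and let $\mathcal{D}^B\subset(\mathcal{F}_3\times\mathbb{R}^p)\times(\mathcal{E}_3\times\mathbb{R}^p)$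 be a Dirac structure with respect to the pairing $\langle(f^B,f,e^B,e),(\tilde f^B,\tilde f,\tilde e^B,\tilde e)\rangle=\langle f^B,j_3^{-1}\tilde e^B\rangle+\langle e^B,j_3\tilde f^B\rangle-\langle f,\tilde e\rangle-\langle e,\tilde f\rangle$. Define the composition $\mathcal{D}^A\circ\mathcal{D}^B$ as the set of all $(\delta f^A,f^B,e^A,e^B)$ with $\delta f^A=(\delta f_\varepsilon,\delta f_w,\delta f_{\partial,n-p})$, $e^A=(e_\varepsilon,e_w,e_{\partial,n-p})$, $f^B\in\mathcal{F}_3$, $e^B\in\mathcal{E}_3$, for which there exist $f_p,e_p\in\mathbb{R}^p$ with $(\delta f^A,f_p,e^A,e_p)\in\mathcal{D}^A$ and $(f^B,-f_p,e^B,e_p)\in\mathcal{D}^B$, and equip it with the pairing $$\langle\mathfrak{d},\tilde{\mathfrak{d}}\rangle_\dagger=\langle\delta f_\varepsilon,\tilde e_\varepsilon\rangle-\langle\delta f_w,\tilde e_w\rangle-\langle\delta f_{\partial,n-p},\tilde e_{\partial,n-p}\rangle+\langle f^B,j_3^{-1}\tilde e^B\rangle+\langle e_\varepsilon,\delta\tilde f_\varepsilon\rangle-\langle e_w,\delta\tilde f_w\rangle-\langle e_{\partial,n-p},\delta\tilde f_{\partial,n-p}\rangle+\langle e^B,j_3\tilde f^B\rangle.$$ Then $\langle\mathfrak{d},\mathfrak{d}\rangle_\dagger=0$ for every $\mathfrak{d}\in\mathcal{D}^A\circ\mathcal{D}^B$.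
   Context: Inner products on $\mathcal{X}$ are the standard $L^2$ ones and $H^*$ is the $L^2$-adjoint of $H$. A Dirac structure with respect to a symmetric bilinear pairing on a bond space is a linear subspace equal to its orthogonal complement with respect to that pairing. $\mathcal{D}^A$ is the stochastic port-Hamiltonian Dirac structure, split into the part $\mathcal{X}\times Z\times\mathbb{R}^{n-p}$ (with $j_1=\mathrm{diag}(I_\mathcal{X},-I_Z,-I_{\mathbb{R}^{n-p}})$) and the interconnection part $\mathbb{R}^p$ (with $j_2=-I_{\mathbb{R}^p}$); the interconnection of $\mathcal{D}^A$ and $\mathcal{D}^B$ is through the $p$ boundary ports $f_p,e_p$. *)

theory Defs
  imports "HOL-Analysis.Analysis" "Jordan_Normal_Form.Matrix"
begin

text \<open>Vectors of R^k are JNF vectors in carrier_vec k; elements of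
  X = L^2([a,b];R^n) are represented by functions real => real vec.\<close>

definition sq_int_on :: "real \<Rightarrow> real \<Rightarrow> (real \<Rightarrow> real) \<Rightarrow> bool" where
  "sq_int_on a b f \<longleftrightarrow> set_borel_measurable lborel {a..b} f
      \<and> set_integrable lborel {a..b} (\<lambda>x. (f x)^2)"

definition L2vec :: "real \<Rightarrow> real \<Rightarrow> nat \<Rightarrow> (real \<Rightarrow> real vec) \<Rightarrow> bool" where
  "L2vec a b n f \<longleftrightarrow> (\<forall>x\<in>{a..b}. f x \<in> carrier_vec n)
      \<and> (\<forall>i<n. sq_int_on a b (\<lambda>x. vec_index (f x) i))"

definition L2inner :: "real \<Rightarrow> real \<Rightarrow> (real \<Rightarrow> real vec) \<Rightarrow> (real \<Rightarrow> real vec) \<Rightarrow> real" where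
  "L2inner a b f g = (LINT x:{a..b}|lborel. scalar_prod (f x) (g x))"

definition L2eq :: "real \<Rightarrow> real \<Rightarrow> (real \<Rightarrow> real vec) \<Rightarrow> (real \<Rightarrow> real vec) \<Rightarrow> bool" where
  "L2eq a b f g \<longleftrightarrow> (AE x in lborel. x \<in> {a..b} \<longrightarrow> f x = g x)"

text \<open>e is the (continuous) representative of an H^1([a,b];R^n) function with
  weak derivative de (an element of X):  e(x) = e(a) + int_a^x de.\<close>
definition H1_deriv :: "real \<Rightarrow> real \<Rightarrow> nat \<Rightarrow> (real \<Rightarrow> real vec) \<Rightarrow> (real \<Rightarrow> real vec) \<Rightarrow> bool" where
  "H1_deriv a b n e de \<longleftrightarrow> L2vec a b n de \<and> (\<forall>x\<in>{a..b}. e x \<in> carrier_vec n)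
      \<and> (\<forall>i<n. \<forall>x\<in>{a..b}.
            vec_index (e x) i = vec_index (e a) i + (LINT t:{a..x}|lborel. vec_index (de t) i))"

definition bounded_linear_to_L2 :: "real \<Rightarrow> real \<Rightarrow> nat \<Rightarrow> ('z::real_normed_vector \<Rightarrow> real \<Rightarrow> real vec) \<Rightarrow> bool" where
  "bounded_linear_to_L2 a b n H \<longleftrightarrow> (\<forall>z. L2vec a b n (H z))
     \<and> (\<forall>z w. L2eq a b (H (z + w)) (\<lambda>x. H z x + H w x))
     \<and> (\<forall>c z. L2eq a b (H (c *\<^sub>R z)) (\<lambda>x. smult_vec c (H z x)))
     \<and> (\<exists>K. \<forall>z. sqrt (L2inner a b (H z) (H z)) \<le> K * norm z)"

text \<open>The stochastic port-Hamiltonian Dirac structure D^A, as a set of tuples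
  (df_eps, df_w, df_bd, e_eps, e_w, e_bd).  The condition on e_w says e_w = H^* e_eps.\<close>
definition DA :: "real \<Rightarrow> real \<Rightarrow> nat \<Rightarrow> real mat \<Rightarrow> real mat \<Rightarrow>
    ('z::real_inner \<Rightarrow> real \<Rightarrow> real vec) \<Rightarrow> real \<Rightarrow>
    ((real \<Rightarrow> real vec) \<times> 'z \<times> real vec \<times> (real \<Rightarrow> real vec) \<times> 'z \<times> real vec) set" where
  "DA a b n P1 P0 H dt = {(df, dfw, dfb, e, ew, eb).
     L2vec a b n df \<and> dfb \<in> carrier_vec n \<and> eb \<in> carrier_vec n \<and>
     (\<exists>de. H1_deriv a b n e de \<and>
        L2eq a b df (\<lambda>x. smult_vec dt (mult_mat_vec P1 (de x) + mult_mat_vec P0 (e x)) + H dfw x)) \<and>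
     dfb = smult_vec (dt / sqrt 2) (mult_mat_vec P1 (e b - e a)) \<and>
     eb = smult_vec (1 / sqrt 2) (e b + e a) \<and>
     (\<forall>z. inner z ew = L2inner a b (H z) e)}"

definition pairB :: "('f::real_inner \<Rightarrow> 'e::real_inner) \<Rightarrow>
    (('f \<times> real vec) \<times> ('e \<times> real vec)) \<Rightarrow> (('f \<times> real vec) \<times> ('e \<times> real vec)) \<Rightarrow> real" where
  "pairB j3 d d' = (case d of ((fB, f), (eB, e)) \<Rightarrow> case d' of ((fB', f'), (eB', e')) \<Rightarrow>
      inner fB (Hilbert_Choice.inv j3 eB') + inner eB (j3 fB') - scalar_prod f e' - scalar_prod e f')"

text \<open>Dirac structure: a subset of the bond space equal to its orthogonal complement
  (which is automatically a linear subspace).\<close>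
definition dirac_B :: "nat \<Rightarrow> ('f::real_inner \<Rightarrow> 'e::real_inner) \<Rightarrow>
    (('f \<times> real vec) \<times> ('e \<times> real vec)) set \<Rightarrow> bool" where
  "dirac_B p j3 D \<longleftrightarrow>
     D = {d. d \<in> (UNIV \<times> carrier_vec p) \<times> (UNIV \<times> carrier_vec p) \<and> (\<forall>d'\<in>D. pairB j3 d d' = 0)}"

definition compAB :: "real \<Rightarrow> real \<Rightarrow> nat \<Rightarrow> nat \<Rightarrow> real mat \<Rightarrow> real mat \<Rightarrow>
    ('z::real_inner \<Rightarrow> real \<Rightarrow> real vec) \<Rightarrow> real \<Rightarrow>
    (('f::real_inner \<times> real vec) \<times> ('e::real_inner \<times> real vec)) set \<Rightarrow>
    ((real \<Rightarrow> real vec) \<times> 'z \<times> real vec \<times> (real \<Rightarrow> real vec) \<times> 'z \<times> real vec \<times> 'f \<times> 'e) set" where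
  "compAB a b n p P1 P0 H dt DB = {(df, dfw, df1, e, ew, e1, fB, eB).
     df1 \<in> carrier_vec (n - p) \<and> e1 \<in> carrier_vec (n - p) \<and>
     (\<exists>fp ep. fp \<in> carrier_vec p \<and> ep \<in> carrier_vec p \<and>
        (df, dfw, append_vec df1 fp, e, ew, append_vec e1 ep) \<in> DA a b n P1 P0 H dt \<and>
        ((fB, - fp), (eB, ep)) \<in> DB)}"

definition pair_dagger :: "real \<Rightarrow> real \<Rightarrow> ('f::real_inner \<Rightarrow> 'e::real_inner) \<Rightarrow>
    ((real \<Rightarrow> real vec) \<times> 'z::real_inner \<times> real vec \<times> (real \<Rightarrow> real vec) \<times> 'z \<times> real vec \<times> 'f \<times> 'e) \<Rightarrow>
    ((real \<Rightarrow> real vec) \<times> 'z \<times> real vec \<times> (real \<Rightarrow> real vec) \<times> 'z \<times> real vec \<times> 'f \<times> 'e) \<Rightarrow> real" where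
  "pair_dagger a b j3 d d' = (case d of (df, dfw, df1, e, ew, e1, fB, eB) \<Rightarrow>
     case d' of (df', dfw', df1', e', ew', e1', fB', eB') \<Rightarrow>
       L2inner a b df e' - inner dfw ew' - scalar_prod df1 e1' + inner fB (Hilbert_Choice.inv j3 eB')
     + L2inner a b e df' - inner ew dfw' - scalar_prod e1 df1' + inner eB (j3 fB'))"

end

theory Submission
  imports Defs
begin

(*
  Because the pairing is symmetric, <d,d>_dagger is twice
    <df_eps, e_eps> - <df_w, e_w> - <df_{bd,n-p}, e_{bd,n-p}> + <e^B, j3 f^B>.
  Unitarity of j3 and isotropy of the Dirac structure D^B (every element pairs to zero
  with itself) give <e^B, j3 f^B> = - <f_p, e_p>. On the D^A side the skew-symmetric P0
  contributes nothing pointwise, <H df_w, e_eps> = <df_w, H^* e_eps>, and for symmetric P1,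
  integration by parts for the absolutely continuous e_eps (proved via Fubini) gives
    int_a^b <P1 e_eps', e_eps> = (<P1 e_eps(b), e_eps(b)> - <P1 e_eps(a), e_eps(a)>) / 2,
  which is <df_bd, e_bd> / dt. As <df_bd, e_bd> = <df_{bd,n-p}, e_{bd,n-p}> + <f_p, e_p>,
  everything cancels.
*)

(* The HOL-Analysis notations clash with vec_index and scalar_prod of the JNF vectors in Defs. *)
no_notation vec_nth (infixl \<open>$\<close> 90) and inner (infix \<open>\<bullet>\<close> 70)

lemma sq_int_on_imp_set_integrable:
  assumes "sq_int_on a b f"
  shows "set_integrable lborel {a..b} f"
proof (rule set_integrable_bound)
  show "set_integrable lborel {a..b} (\<lambda>x. 1 + (f x)\<^sup>2)"
    using assms borel_integrable_atLeastAtMost'[OF continuous_on_const] unfolding sq_int_on_def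
    by (intro set_integral_add(1)) auto
  show "set_borel_measurable lborel {a..b} f"
    using assms unfolding sq_int_on_def by simp
  have "\<bar>y\<bar> \<le> 1 + y\<^sup>2" for y :: real
    using zero_le_power2[of "\<bar>y\<bar> - 1"] unfolding power2_eq_square
    by (simp add: algebra_simps)
  then show "AE x in lborel. x \<in> {a..b} \<longrightarrow> norm (f x) \<le> norm (1 + (f x)\<^sup>2)"
    by auto
qed

lemma set_integrable_mult_continuous:
  fixes f g :: "real \<Rightarrow> real"
  assumes f: "set_integrable lborel {a..b} f" and g: "continuous_on {a..b} g"
  shows "set_integrable lborel {a..b} (\<lambda>x. f x * g x)"
proof -
  obtain B where B: "\<forall>x\<in>{a..b}. norm (g x) \<le> B"
    using compact_imp_bounded[OF compact_continuous_image[OF g compact_Icc]]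
    unfolding bounded_iff by blast
  show ?thesis
  proof (rule set_integrable_bound[of _ _ "\<lambda>x. B * f x"])
    show "set_integrable lborel {a..b} (\<lambda>x. B * f x)"
      using f by simp
    have "(\<lambda>x. indicator {a..b} x *\<^sub>R (f x * g x))
        = (\<lambda>x. (indicator {a..b} x *\<^sub>R f x) * (indicator {a..b} x *\<^sub>R g x))"
      by (auto simp: indicator_def)
    then show "set_borel_measurable lborel {a..b} (\<lambda>x. f x * g x)"
      using f borel_measurable_continuous_on_indicator[OF _ g]
      unfolding set_integrable_def set_borel_measurable_def by simp
    have "norm (f x * g x) \<le> norm (B * f x)" if "x \<in> {a..b}" for x
    proof -
      have "\<bar>g x\<bar> \<le> \<bar>B\<bar>"
        using B that abs_ge_self[of B] by fastforce
      then have "\<bar>f x\<bar> * \<bar>g x\<bar> \<le> \<bar>f x\<bar> * \<bar>B\<bar>"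
        by (rule mult_left_mono) simp
      then show ?thesis by (simp add: abs_mult mult.commute)
    qed
    then show "AE x in lborel. x \<in> {a..b} \<longrightarrow> norm (f x * g x) \<le> norm (B * f x)"
      by simp
  qed
qed

lemma continuous_on_indefinite_set_integral:
  fixes u :: "real \<Rightarrow> real"
  assumes "set_integrable lborel {a..b} u"
  shows "continuous_on {a..b} (\<lambda>x. LINT t:{a..x}|lborel. u t)"
proof -
  have "continuous_on {a..b} (\<lambda>x. integral {a..x} u)"
    using set_borel_integral_eq_integral(1)[OF assms] by (rule indefinite_integral_continuous_1)
  moreover have "(LINT t:{a..x}|lborel. u t) = integral {a..x} u" if "x \<in> {a..b}" for x
    using set_integrable_subset[OF assms] that by (intro set_borel_integral_eq_integral(2)) auto
  ultimately show ?thesis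
    by (rule continuous_on_cong[OF refl, THEN iffD2, rotated])
qed

lemma set_integrable_sum:
  fixes f :: "'i \<Rightarrow> 'a \<Rightarrow> 'b::{banach, second_countable_topology}"
  assumes "\<And>i. i \<in> I \<Longrightarrow> set_integrable M A (f i)"
  shows "set_integrable M A (\<lambda>x. \<Sum>i\<in>I. f i x)"
  using assms unfolding set_integrable_def by (simp add: scaleR_sum_right)

lemma set_integral_sum:
  fixes f :: "'i \<Rightarrow> 'a \<Rightarrow> 'b::{banach, second_countable_topology}"
  assumes "\<And>i. i \<in> I \<Longrightarrow> set_integrable M A (f i)"
  shows "(LINT x:A|M. \<Sum>i\<in>I. f i x) = (\<Sum>i\<in>I. LINT x:A|M. f i x)"
  using assms unfolding set_integrable_def set_lebesgue_integral_def
  by (simp add: scaleR_sum_right Bochner_Integration.integral_sum)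

lemma set_integral_cong_AE_integrable:
  fixes f g :: "'a \<Rightarrow> 'b::{banach, second_countable_topology}"
  assumes "set_integrable M A f" "set_integrable M A g" "AE x in M. x \<in> A \<longrightarrow> f x = g x"
  shows "(LINT x:A|M. f x) = (LINT x:A|M. g x)"
  unfolding set_lebesgue_integral_def
proof (rule integral_cong_AE)
  show "AE x in M. indicator A x *\<^sub>R f x = indicator A x *\<^sub>R g x"
    using assms(3) by eventually_elim (auto simp: indicator_def)
qed (use assms(1,2) in \<open>auto simp: set_integrable_def\<close>)

(* Fubini on the two halves of the plane cut by the diagonal. *)
lemma lborel_integral_product_triangles:
  fixes f g :: "real \<Rightarrow> real"
  assumes f: "integrable lborel f" and g: "integrable lborel g"
  shows "(LINT t|lborel. f t * (LINT s:{..t}|lborel. g s))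
       + (LINT s|lborel. g s * (LINT t:{..<s}|lborel. f t))
       = (LINT t|lborel. f t) * (LINT s|lborel. g s)"
proof -
  let ?F = "\<lambda>(t, s). f t * g s"
  let ?L = "\<lambda>(t, s). if s \<le> t then f t * g s else 0"
  let ?U = "\<lambda>(t, s). if s \<le> t then 0 else f t * g s"
  have F: "integrable (lborel \<Otimes>\<^sub>M lborel) ?F"
    using f g by (intro lborel_pair.Fubini_integrable) (auto simp: abs_mult)
  have L: "integrable (lborel \<Otimes>\<^sub>M lborel) ?L"
    by (rule Bochner_Integration.integrable_bound[OF F]) (use f g in measurable, auto)
  have U: "integrable (lborel \<Otimes>\<^sub>M lborel) ?U"
    by (rule Bochner_Integration.integrable_bound[OF F]) (use f g in measurable, auto)
  have "integral\<^sup>L (lborel \<Otimes>\<^sub>M lborel) ?F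
      = integral\<^sup>L (lborel \<Otimes>\<^sub>M lborel) ?L + integral\<^sup>L (lborel \<Otimes>\<^sub>M lborel) ?U"
    by (subst Bochner_Integration.integral_add[OF L U, symmetric])
      (auto intro!: Bochner_Integration.integral_cong)
  moreover have "integral\<^sup>L (lborel \<Otimes>\<^sub>M lborel) ?F = (LINT t|lborel. f t) * (LINT s|lborel. g s)"
    using lborel_pair.integral_fst[OF F] by simp
  moreover have "integral\<^sup>L (lborel \<Otimes>\<^sub>M lborel) ?L = (LINT t|lborel. f t * (LINT s:{..t}|lborel. g s))"
  proof -
    have "(\<lambda>s. ?L (t, s)) = (\<lambda>s. f t * (indicator {..t} s *\<^sub>R g s))" for t
      by (auto simp: indicator_def)
    then have "(LINT s|lborel. ?L (t, s)) = f t * (LINT s:{..t}|lborel. g s)" for t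
      by (simp add: set_lebesgue_integral_def)
    then show ?thesis
      using lborel_pair.integral_fst[OF L] by simp
  qed
  moreover have "integral\<^sup>L (lborel \<Otimes>\<^sub>M lborel) ?U = (LINT s|lborel. g s * (LINT t:{..<s}|lborel. f t))"
  proof -
    have "(\<lambda>t. ?U (t, s)) = (\<lambda>t. g s * (indicator {..<s} t *\<^sub>R f t))" for s
      by (auto simp: indicator_def)
    then have "(LINT t|lborel. ?U (t, s)) = g s * (LINT t:{..<s}|lborel. f t)" for s
      by (simp add: set_lebesgue_integral_def)
    then show ?thesis
      using lborel_pair.integral_snd[OF U] by simp
  qed
  ultimately show ?thesis by simp
qed

lemma set_integral_mult_indefinite_integrals:
  fixes u v :: "real \<Rightarrow> real"
  assumes u: "set_integrable lborel {a..b} u" and v: "set_integrable lborel {a..b} v"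
  shows "(LINT t:{a..b}|lborel. u t * (LINT s:{a..t}|lborel. v s))
       + (LINT t:{a..b}|lborel. v t * (LINT s:{a..t}|lborel. u s))
       = (LINT t:{a..b}|lborel. u t) * (LINT t:{a..b}|lborel. v t)"
proof -
  define f where "f t = indicator {a..b} t *\<^sub>R u t" for t
  define g where "g t = indicator {a..b} t *\<^sub>R v t" for t
  have u_meas: "set_borel_measurable lborel S u" if "S \<subseteq> {a..b}" "S \<in> sets lborel" for S
    using set_integrable_subset[OF u that(2,1)]
    unfolding set_integrable_def set_borel_measurable_def by (rule borel_measurable_integrable)
  have lower: "(\<lambda>t. f t * (LINT s:{..t}|lborel. g s))
      = (\<lambda>t. indicator {a..b} t *\<^sub>R (u t * (LINT s:{a..t}|lborel. v s)))"
  proof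
    fix t
    show "f t * (LINT s:{..t}|lborel. g s) = indicator {a..b} t *\<^sub>R (u t * (LINT s:{a..t}|lborel. v s))"
    proof (cases "t \<in> {a..b}")
      case True
      then have "(\<lambda>s. indicator {..t} s *\<^sub>R g s) = (\<lambda>s. indicator {a..t} s *\<^sub>R v s)"
        by (auto simp: g_def indicator_def)
      then show ?thesis
        using True by (simp add: f_def set_lebesgue_integral_def)
    qed (simp add: f_def)
  qed
  have upper: "(\<lambda>s. g s * (LINT t:{..<s}|lborel. f t))
      = (\<lambda>s. indicator {a..b} s *\<^sub>R (v s * (LINT t:{a..s}|lborel. u t)))"
  proof
    fix s
    show "g s * (LINT t:{..<s}|lborel. f t) = indicator {a..b} s *\<^sub>R (v s * (LINT t:{a..s}|lborel. u t))"
    proof (cases "s \<in> {a..b}")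
      case True
      then have "(\<lambda>t. indicator {..<s} t *\<^sub>R f t) = (\<lambda>t. indicator {a..<s} t *\<^sub>R u t)"
        by (auto simp: f_def indicator_def)
      moreover have "(LINT t:{a..<s}|lborel. u t) = (LINT t:{a..s}|lborel. u t)"
      proof (rule set_integral_cong_set)
        show "set_borel_measurable lborel {a..<s} u" "set_borel_measurable lborel {a..s} u"
          using True by (auto intro!: u_meas)
        show "AE x in lborel. x \<in> {a..s} \<longleftrightarrow> x \<in> {a..<s}"
          using AE_lborel_singleton[of s] by eventually_elim auto
      qed
      ultimately show ?thesis
        using True by (simp add: g_def set_lebesgue_integral_def)
    qed (simp add: g_def)
  qed
  have "integrable lborel f" "integrable lborel g"
    using u v unfolding set_integrable_def f_def[abs_def] g_def[abs_def] .
  from lborel_integral_product_triangles[OF this] show ?thesis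
    unfolding lower upper by (simp add: f_def g_def set_lebesgue_integral_def)
qed

lemma set_integral_by_parts_indefinite:
  fixes f g f' g' :: "real \<Rightarrow> real"
  assumes "a \<le> b"
    and f': "set_integrable lborel {a..b} f'" and g': "set_integrable lborel {a..b} g'"
    and f: "\<And>x. x \<in> {a..b} \<Longrightarrow> f x = f a + (LINT t:{a..x}|lborel. f' t)"
    and g: "\<And>x. x \<in> {a..b} \<Longrightarrow> g x = g a + (LINT t:{a..x}|lborel. g' t)"
  shows "(LINT x:{a..b}|lborel. f' x * g x) + (LINT x:{a..b}|lborel. g' x * f x)
       = f b * g b - f a * g a"
proof -
  define F where "F x = (LINT t:{a..x}|lborel. f' t)" for x
  define G where "G x = (LINT t:{a..x}|lborel. g' t)" for x
  have f'G: "set_integrable lborel {a..b} (\<lambda>x. f' x * G x)"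
    and g'F: "set_integrable lborel {a..b} (\<lambda>x. g' x * F x)"
    unfolding F_def G_def using f' g'
    by (auto intro!: set_integrable_mult_continuous continuous_on_indefinite_set_integral)
  have "f' x * g x = g a * f' x + f' x * G x" "g' x * f x = f a * g' x + g' x * F x"
    if "x \<in> {a..b}" for x
    unfolding f[OF that] g[OF that] F_def G_def by (simp_all add: algebra_simps)
  then have "(LINT x:{a..b}|lborel. f' x * g x) = (LINT x:{a..b}|lborel. g a * f' x + f' x * G x)"
    and "(LINT x:{a..b}|lborel. g' x * f x) = (LINT x:{a..b}|lborel. f a * g' x + g' x * F x)"
    by (auto intro: set_lebesgue_integral_cong)
  then have fg: "(LINT x:{a..b}|lborel. f' x * g x) = g a * F b + (LINT x:{a..b}|lborel. f' x * G x)"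
    and gf: "(LINT x:{a..b}|lborel. g' x * f x) = f a * G b + (LINT x:{a..b}|lborel. g' x * F x)"
    using f' g' f'G g'F by (simp_all add: F_def G_def)
  have "f b = f a + F b" "g b = g a + G b"
    using f[of b] g[of b] \<open>a \<le> b\<close> by (simp_all add: F_def G_def)
  moreover have "(LINT x:{a..b}|lborel. f' x * G x) + (LINT x:{a..b}|lborel. g' x * F x) = F b * G b"
    using set_integral_mult_indefinite_integrals[OF f' g'] by (simp add: F_def G_def)
  ultimately show ?thesis
    using fg gf by (simp add: algebra_simps)
qed

lemma sum_symmetric_weights_half:
  fixes P I K :: "nat \<Rightarrow> nat \<Rightarrow> real"
  assumes P: "\<And>i j. i < n \<Longrightarrow> j < n \<Longrightarrow> P i j = P j i"
    and IK: "\<And>i j. i < n \<Longrightarrow> j < n \<Longrightarrow> I i j + I j i = K i j"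
  shows "(\<Sum>i\<in>{0..<n}. \<Sum>j\<in>{0..<n}. P i j * I i j) = (\<Sum>i\<in>{0..<n}. \<Sum>j\<in>{0..<n}. P i j * K i j) / 2"
proof -
  have "(\<Sum>i\<in>{0..<n}. \<Sum>j\<in>{0..<n}. P i j * I i j) = (\<Sum>i\<in>{0..<n}. \<Sum>j\<in>{0..<n}. P i j * I j i)"
    by (subst sum.swap) (auto simp: P intro!: sum.cong)
  then have "2 * (\<Sum>i\<in>{0..<n}. \<Sum>j\<in>{0..<n}. P i j * I i j)
      = (\<Sum>i\<in>{0..<n}. \<Sum>j\<in>{0..<n}. P i j * (I i j + I j i))"
    by (simp add: distrib_left sum.distrib)
  also have "\<dots> = (\<Sum>i\<in>{0..<n}. \<Sum>j\<in>{0..<n}. P i j * K i j)"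
    by (auto simp: IK intro!: sum.cong)
  finally show ?thesis by simp
qed

lemma index_mult_mat_vec_eq_sum:
  fixes A :: "'a::comm_ring mat"
  assumes "A \<in> carrier_mat m n" "v \<in> carrier_vec n" "i < m"
  shows "(A *\<^sub>v v) $ i = (\<Sum>j\<in>{0..<n}. A $$ (i, j) * v $ j)"
  using assms by (auto simp: scalar_prod_def intro!: sum.cong)

lemma scalar_prod_mult_mat_vec_eq_sum:
  fixes A :: "'a::comm_ring mat"
  assumes "A \<in> carrier_mat m n" "u \<in> carrier_vec m" "v \<in> carrier_vec n"
  shows "u \<bullet> (A *\<^sub>v v) = (\<Sum>i\<in>{0..<m}. \<Sum>j\<in>{0..<n}. A $$ (i, j) * (u $ i * v $ j))"
  using assms by (auto simp: scalar_prod_def sum_distrib_left mult_ac intro!: sum.cong)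

lemma scalar_prod_mult_mat_vec_symmetric:
  fixes A :: "'a::comm_ring mat" and u v :: "'a vec"
  assumes "A \<in> carrier_mat n n" "transpose_mat A = A" "u \<in> carrier_vec n" "v \<in> carrier_vec n"
  shows "u \<bullet> (A *\<^sub>v v) = v \<bullet> (A *\<^sub>v u)"
  using transpose_vec_mult_scalar[of A n n v u] comm_scalar_prod[of "A *\<^sub>v u" n v] assms by simp

lemma scalar_prod_mult_mat_vec_skew_self:
  fixes A :: "real mat"
  assumes "A \<in> carrier_mat n n" "A = - transpose_mat A" "v \<in> carrier_vec n"
  shows "v \<bullet> (A *\<^sub>v v) = 0"
proof -
  have "A *\<^sub>v v = (- transpose_mat A) *\<^sub>v v"
    using assms(2) by (rule arg_cong[where f = "\<lambda>M. M *\<^sub>v v"])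
  then have "v \<bullet> (A *\<^sub>v v) = - (v \<bullet> (transpose_mat A *\<^sub>v v))"
    using assms(1,3) by simp
  also have "v \<bullet> (transpose_mat A *\<^sub>v v) = v \<bullet> (A *\<^sub>v v)"
    using transpose_vec_mult_scalar[of A n n v v] comm_scalar_prod[of "transpose_mat A *\<^sub>v v" n v] assms
    by simp
  finally show ?thesis by simp
qed

lemma scalar_prod_mult_mat_vec_diff_sum:
  fixes A :: "'a::comm_ring mat" and u v :: "'a vec"
  assumes "A \<in> carrier_mat n n" "transpose_mat A = A" "u \<in> carrier_vec n" "v \<in> carrier_vec n"
  shows "(A *\<^sub>v (u - v)) \<bullet> (u + v) = u \<bullet> (A *\<^sub>v u) - v \<bullet> (A *\<^sub>v v)"
proof -
  have "(A *\<^sub>v (u - v)) \<bullet> (u + v) = (u + v) \<bullet> (A *\<^sub>v u) - (u + v) \<bullet> (A *\<^sub>v v)"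
    using assms
    by (simp add: mult_minus_distrib_mat_vec comm_scalar_prod[of _ n] scalar_prod_minus_distrib[of _ n])
  also have "\<dots> = u \<bullet> (A *\<^sub>v u) + v \<bullet> (A *\<^sub>v u) - u \<bullet> (A *\<^sub>v v) - v \<bullet> (A *\<^sub>v v)"
    using assms by (simp add: add_scalar_prod_distrib[of _ n])
  finally show ?thesis
    using scalar_prod_mult_mat_vec_symmetric[OF assms] by simp
qed

lemma scalar_prod_boundary_ports:
  fixes P :: "real mat"
  assumes "P \<in> carrier_mat n n" "transpose_mat P = P" "u \<in> carrier_vec n" "v \<in> carrier_vec n"
  shows "((c / sqrt 2) \<cdot>\<^sub>v (P *\<^sub>v (u - v))) \<bullet> ((1 / sqrt 2) \<cdot>\<^sub>v (u + v))
       = c * (u \<bullet> (P *\<^sub>v u) - v \<bullet> (P *\<^sub>v v)) / 2"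
proof -
  have "sqrt 2 * sqrt 2 = (2::real)" by simp
  then show ?thesis
    using scalar_prod_mult_mat_vec_diff_sum[OF assms] assms by simp
qed

lemma scalar_prod_sym_skew_flow:
  fixes P Q :: "real mat"
  assumes "P \<in> carrier_mat n n" "transpose_mat P = P" "Q \<in> carrier_mat n n" "Q = - transpose_mat Q"
    and "u \<in> carrier_vec n" "v \<in> carrier_vec n" "h \<in> carrier_vec n"
  shows "(c \<cdot>\<^sub>v (P *\<^sub>v u + Q *\<^sub>v v) + h) \<bullet> v = c * (u \<bullet> (P *\<^sub>v v)) + h \<bullet> v"
proof -
  have "(c \<cdot>\<^sub>v (P *\<^sub>v u + Q *\<^sub>v v) + h) \<bullet> v = c * ((P *\<^sub>v u) \<bullet> v + (Q *\<^sub>v v) \<bullet> v) + h \<bullet> v"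
    using assms by (simp add: add_scalar_prod_distrib[of _ n])
  moreover have "(P *\<^sub>v u) \<bullet> v = u \<bullet> (P *\<^sub>v v)" "(Q *\<^sub>v v) \<bullet> v = 0"
    using comm_scalar_prod[of "P *\<^sub>v u" n v] comm_scalar_prod[of "Q *\<^sub>v v" n v]
      scalar_prod_mult_mat_vec_symmetric[of P n v u] scalar_prod_mult_mat_vec_skew_self[of Q n v] assms
    by simp_all
  ultimately show ?thesis by simp
qed

lemma continuous_on_index_mult_mat_vec:
  fixes A :: "real mat" and v :: "'a::topological_space \<Rightarrow> real vec"
  assumes "A \<in> carrier_mat m n" "\<And>x. x \<in> S \<Longrightarrow> v x \<in> carrier_vec n"
    and "\<And>j. j < n \<Longrightarrow> continuous_on S (\<lambda>x. v x $ j)" and "i < m"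
  shows "continuous_on S (\<lambda>x. (A *\<^sub>v v x) $ i)"
proof -
  have "(A *\<^sub>v v x) $ i = (\<Sum>j\<in>{0..<n}. A $$ (i, j) * v x $ j)" if "x \<in> S" for x
    using assms that by (intro index_mult_mat_vec_eq_sum) auto
  moreover have "continuous_on S (\<lambda>x. \<Sum>j\<in>{0..<n}. A $$ (i, j) * v x $ j)"
    using assms(3) by (intro continuous_intros) auto
  ultimately show ?thesis
    by (rule continuous_on_cong[OF refl, THEN iffD2])
qed

lemma set_integrable_scalar_prod:
  fixes f g :: "real \<Rightarrow> real vec"
  assumes "\<And>i. i < n \<Longrightarrow> set_integrable lborel {a..b} (\<lambda>x. f x $ i)"
    and "\<And>i. i < n \<Longrightarrow> continuous_on {a..b} (\<lambda>x. g x $ i)"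
    and "\<And>x. x \<in> {a..b} \<Longrightarrow> g x \<in> carrier_vec n"
  shows "set_integrable lborel {a..b} (\<lambda>x. f x \<bullet> g x)"
proof -
  have "set_integrable lborel {a..b} (\<lambda>x. \<Sum>i\<in>{0..<n}. f x $ i * g x $ i)"
    using assms by (intro set_integrable_sum set_integrable_mult_continuous) auto
  moreover have "(\<Sum>i\<in>{0..<n}. f x $ i * g x $ i) = f x \<bullet> g x" if "x \<in> {a..b}" for x
    using assms(3)[OF that] by (simp add: scalar_prod_def)
  ultimately show ?thesis
    by (rule set_integrable_cong[OF refl refl, THEN iffD1, rotated])
qed

lemma L2vec_index_set_integrable:
  fixes f :: "real \<Rightarrow> real vec"
  assumes "L2vec a b n f" "i < n"
  shows "set_integrable lborel {a..b} (\<lambda>x. f x $ i)"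
  using assms sq_int_on_imp_set_integrable unfolding L2vec_def by blast

lemma L2inner_commute:
  assumes "\<And>x. x \<in> {a..b} \<Longrightarrow> f x \<in> carrier_vec n" "\<And>x. x \<in> {a..b} \<Longrightarrow> g x \<in> carrier_vec n"
  shows "L2inner a b f g = L2inner a b g f"
  unfolding L2inner_def using assms by (intro set_lebesgue_integral_cong) (auto intro: comm_scalar_prod)

lemma H1_deriv_set_integrable:
  assumes "H1_deriv a b n e de" "i < n"
  shows "set_integrable lborel {a..b} (\<lambda>x. de x $ i)"
  using assms L2vec_index_set_integrable unfolding H1_deriv_def by blast

lemma H1_deriv_continuous:
  assumes "H1_deriv a b n e de" "i < n"
  shows "continuous_on {a..b} (\<lambda>x. e x $ i)"
proof -
  have "continuous_on {a..b} (\<lambda>x. e a $ i + (LINT t:{a..x}|lborel. de t $ i))"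
    using H1_deriv_set_integrable[OF assms]
    by (intro continuous_intros continuous_on_indefinite_set_integral) auto
  moreover have "e x $ i = e a $ i + (LINT t:{a..x}|lborel. de t $ i)" if "x \<in> {a..b}" for x
    using assms that unfolding H1_deriv_def by blast
  ultimately show ?thesis
    by (rule continuous_on_cong[OF refl, THEN iffD2, rotated])
qed

lemma H1_deriv_integral_by_parts:
  assumes "a \<le> b" "H1_deriv a b n e de" "i < n" "j < n"
  shows "(LINT x:{a..b}|lborel. de x $ i * e x $ j) + (LINT x:{a..b}|lborel. de x $ j * e x $ i)
       = e b $ i * e b $ j - e a $ i * e a $ j"
proof -
  have e_eq: "\<And>k x. k < n \<Longrightarrow> x \<in> {a..b} \<Longrightarrow> e x $ k = e a $ k + (LINT t:{a..x}|lborel. de t $ k)"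
    using assms(2) unfolding H1_deriv_def by blast
  show ?thesis
    using set_integral_by_parts_indefinite[OF assms(1) H1_deriv_set_integrable[OF assms(2,3)]
        H1_deriv_set_integrable[OF assms(2,4)] e_eq[OF assms(3)] e_eq[OF assms(4)]] .
qed

lemma H1_deriv_integral_quadratic_form:
  assumes "a \<le> b" and e: "H1_deriv a b n e de" and P: "P \<in> carrier_mat n n" "transpose_mat P = P"
  shows "(LINT x:{a..b}|lborel. de x \<bullet> (P *\<^sub>v e x)) = (e b \<bullet> (P *\<^sub>v e b) - e a \<bullet> (P *\<^sub>v e a)) / 2"
proof -
  have carrier: "\<And>x. x \<in> {a..b} \<Longrightarrow> e x \<in> carrier_vec n \<and> de x \<in> carrier_vec n"
    using e unfolding H1_deriv_def L2vec_def by blast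
  define I where "I i j = (LINT x:{a..b}|lborel. de x $ i * e x $ j)" for i j
  have I: "set_integrable lborel {a..b} (\<lambda>x. de x $ i * e x $ j)" if "i < n" "j < n" for i j
    using that H1_deriv_set_integrable[OF e] H1_deriv_continuous[OF e]
    by (intro set_integrable_mult_continuous) auto
  have "I i j + I j i = e b $ i * e b $ j - e a $ i * e a $ j" if "i < n" "j < n" for i j
    unfolding I_def using \<open>a \<le> b\<close> e that by (rule H1_deriv_integral_by_parts)
  moreover have "P $$ (i, j) = P $$ (j, i)" if "i < n" "j < n" for i j
    using P that by (metis carrier_matD index_transpose_mat(1))
  moreover have "(LINT x:{a..b}|lborel. de x \<bullet> (P *\<^sub>v e x))
      = (LINT x:{a..b}|lborel. \<Sum>i\<in>{0..<n}. \<Sum>j\<in>{0..<n}. P $$ (i, j) * (de x $ i * e x $ j))"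
    using P carrier by (intro set_lebesgue_integral_cong) (auto simp: scalar_prod_mult_mat_vec_eq_sum)
  moreover have "\<dots> = (\<Sum>i\<in>{0..<n}. \<Sum>j\<in>{0..<n}. P $$ (i, j) * I i j)"
  proof -
    have "(LINT x:{a..b}|lborel. \<Sum>j\<in>{0..<n}. P $$ (i, j) * (de x $ i * e x $ j))
        = (\<Sum>j\<in>{0..<n}. P $$ (i, j) * I i j)" if "i < n" for i
      using I[OF that] by (subst set_integral_sum) (auto simp: I_def)
    moreover have "set_integrable lborel {a..b} (\<lambda>x. \<Sum>j\<in>{0..<n}. P $$ (i, j) * (de x $ i * e x $ j))"
      if "i < n" for i
      using I[OF that] by (auto intro!: set_integrable_sum)
    ultimately show ?thesis
      by (subst set_integral_sum) auto
  qed
  moreover have "e b \<bullet> (P *\<^sub>v e b) - e a \<bullet> (P *\<^sub>v e a)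
      = (\<Sum>i\<in>{0..<n}. \<Sum>j\<in>{0..<n}. P $$ (i, j) * (e b $ i * e b $ j - e a $ i * e a $ j))"
    using P carrier \<open>a \<le> b\<close>
    by (simp add: scalar_prod_mult_mat_vec_eq_sum right_diff_distrib sum_subtractf)
  ultimately show ?thesis
    using sum_symmetric_weights_half[of n "\<lambda>i j. P $$ (i, j)" I] by simp
qed

lemma DA_power_balance:
  assumes "a \<le> b"
    and P1: "P1 \<in> carrier_mat n n" "transpose_mat P1 = P1"
    and P0: "P0 \<in> carrier_mat n n" "P0 = - transpose_mat P0"
    and H: "\<And>z. L2vec a b n (H z)"
    and "(df, dfw, dfb, e, ew, eb) \<in> DA a b n P1 P0 H dt"
  shows "L2inner a b df e = inner dfw ew + dfb \<bullet> eb"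
proof -
  obtain de where df: "L2vec a b n df" and e: "H1_deriv a b n e de"
    and flow: "L2eq a b df (\<lambda>x. dt \<cdot>\<^sub>v (P1 *\<^sub>v de x + P0 *\<^sub>v e x) + H dfw x)"
    and dfb: "dfb = (dt / sqrt 2) \<cdot>\<^sub>v (P1 *\<^sub>v (e b - e a))"
    and eb: "eb = (1 / sqrt 2) \<cdot>\<^sub>v (e b + e a)"
    and ew: "inner dfw ew = L2inner a b (H dfw) e"
    using assms(7) unfolding DA_def by auto
  have carrier: "e x \<in> carrier_vec n" "de x \<in> carrier_vec n" "H dfw x \<in> carrier_vec n"
    if "x \<in> {a..b}" for x
    using that e H[of dfw] unfolding H1_deriv_def L2vec_def by auto
  have e_cont: "\<And>i. i < n \<Longrightarrow> continuous_on {a..b} (\<lambda>x. e x $ i)"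
    by (rule H1_deriv_continuous[OF e])
  have P1e_cont: "\<And>i. i < n \<Longrightarrow> continuous_on {a..b} (\<lambda>x. (P1 *\<^sub>v e x) $ i)"
    using P1 carrier e_cont by (intro continuous_on_index_mult_mat_vec) auto
  have de_P1e: "set_integrable lborel {a..b} (\<lambda>x. de x \<bullet> (P1 *\<^sub>v e x))"
    using H1_deriv_set_integrable[OF e] P1 carrier P1e_cont
    by (intro set_integrable_scalar_prod[where n = n]) auto
  have Hdfw_e: "set_integrable lborel {a..b} (\<lambda>x. H dfw x \<bullet> e x)"
    using L2vec_index_set_integrable[OF H] carrier e_cont by (intro set_integrable_scalar_prod[where n = n]) auto
  have "L2inner a b df e = (LINT x:{a..b}|lborel. dt * (de x \<bullet> (P1 *\<^sub>v e x)) + H dfw x \<bullet> e x)"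
    unfolding L2inner_def
  proof (rule set_integral_cong_AE_integrable)
    show "set_integrable lborel {a..b} (\<lambda>x. df x \<bullet> e x)"
      using df carrier e_cont L2vec_index_set_integrable by (intro set_integrable_scalar_prod[where n = n]) auto
    show "set_integrable lborel {a..b} (\<lambda>x. dt * (de x \<bullet> (P1 *\<^sub>v e x)) + H dfw x \<bullet> e x)"
      using de_P1e Hdfw_e by auto
    show "AE x in lborel. x \<in> {a..b} \<longrightarrow> df x \<bullet> e x = dt * (de x \<bullet> (P1 *\<^sub>v e x)) + H dfw x \<bullet> e x"
      using flow unfolding L2eq_def
      by eventually_elim (use P1 P0 carrier in \<open>auto simp: scalar_prod_sym_skew_flow\<close>)
  qed
  also have "\<dots> = dt * (e b \<bullet> (P1 *\<^sub>v e b) - e a \<bullet> (P1 *\<^sub>v e a)) / 2 + inner dfw ew"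
    using de_P1e Hdfw_e H1_deriv_integral_quadratic_form[OF \<open>a \<le> b\<close> e P1]
    by (simp add: ew L2inner_def)
  also have "dt * (e b \<bullet> (P1 *\<^sub>v e b) - e a \<bullet> (P1 *\<^sub>v e a)) / 2 = dfb \<bullet> eb"
    unfolding dfb eb
    by (rule scalar_prod_boundary_ports[symmetric, OF P1]) (use carrier \<open>a \<le> b\<close> in auto)
  finally show ?thesis by simp
qed

lemma dirac_B_pairB_self:
  assumes "dirac_B p j3 D" "d \<in> D"
  shows "pairB j3 d d = 0"
proof -
  have "D = {d. d \<in> (UNIV \<times> carrier_vec p) \<times> (UNIV \<times> carrier_vec p) \<and> (\<forall>d'\<in>D. pairB j3 d d' = 0)}"
    using assms(1) unfolding dirac_B_def .
  then have "d \<in> {d. d \<in> (UNIV \<times> carrier_vec p) \<times> (UNIV \<times> carrier_vec p) \<and> (\<forall>d'\<in>D. pairB j3 d d' = 0)}"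
    using assms(2) by (rule subst[where P = "\<lambda>X. d \<in> X"])
  then show ?thesis
    using assms(2) by simp
qed

lemma inner_inv_isometry:
  assumes "bij j" "\<forall>x y. inner (j x) (j y) = inner x y"
  shows "inner f (Hilbert_Choice.inv j e) = inner e (j f)"
proof -
  have "j (Hilbert_Choice.inv j e) = e"
    using assms(1) by (simp add: bij_is_surj surj_f_inv_f)
  then have "inner (j f) (j (Hilbert_Choice.inv j e)) = inner e (j f)"
    by (simp add: inner_commute)
  then show ?thesis
    using assms(2) by simp
qed

theorem lemma2:
  fixes a b dt :: real and n p :: nat and P1 P0 :: "real mat"
    and H :: "'z::{real_inner, complete_space} \<Rightarrow> real \<Rightarrow> real vec"
    and j3 :: "'f::{real_inner, complete_space} \<Rightarrow> 'e::{real_inner, complete_space}"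
    and DB :: "(('f \<times> real vec) \<times> ('e \<times> real vec)) set"
  assumes "a < b" and "1 \<le> p" and "p \<le> n"
    and "P1 \<in> carrier_mat n n" and "transpose_mat P1 = P1" and "invertible_mat P1"
    and "P0 \<in> carrier_mat n n" and "P0 = - transpose_mat P0"
    and "bounded_linear_to_L2 a b n H"
    and "dt > 0"
    and "linear j3" and "bij j3" and "\<forall>x y. inner (j3 x) (j3 y) = inner x y"
    and "dirac_B p j3 DB"
    and "d \<in> compAB a b n p P1 P0 H dt DB"
  shows "pair_dagger a b j3 d d = 0"
proof -
  obtain df dfw df1 e ew e1 fB eB where d: "d = (df, dfw, df1, e, ew, e1, fB, eB)"
    by (cases d) auto
  obtain fp ep where df1: "df1 \<in> carrier_vec (n - p)" and e1: "e1 \<in> carrier_vec (n - p)"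
    and fp: "fp \<in> carrier_vec p" and ep: "ep \<in> carrier_vec p"
    and DA: "(df, dfw, df1 @\<^sub>v fp, e, ew, e1 @\<^sub>v ep) \<in> DA a b n P1 P0 H dt"
    and DB: "((fB, - fp), (eB, ep)) \<in> DB"
    using assms(15) unfolding d compAB_def by auto
  have "L2inner a b df e = inner dfw ew + df1 \<bullet> e1 + fp \<bullet> ep"
    using DA_power_balance[of a b P1 n P0 H df dfw "df1 @\<^sub>v fp" e ew "e1 @\<^sub>v ep" dt] DA assms(1,4,5,7,8,9)
      scalar_prod_append[OF df1 fp e1 ep]
    unfolding bounded_linear_to_L2_def by simp
  moreover have "L2inner a b e df = L2inner a b df e"
    using DA unfolding DA_def H1_deriv_def L2vec_def by (auto intro!: L2inner_commute)
  moreover have "inner fB (Hilbert_Choice.inv j3 eB) = inner eB (j3 fB)"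
    using assms(12,13) by (rule inner_inv_isometry)
  moreover have "pairB j3 ((fB, - fp), (eB, ep)) ((fB, - fp), (eB, ep)) = 0"
    using assms(14) DB by (rule dirac_B_pairB_self)
  ultimately show ?thesis
    using fp ep comm_scalar_prod[OF ep fp] comm_scalar_prod[OF e1 df1]
    by (simp add: d pair_dagger_def pairB_def inner_commute[of ew])
qed

end
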